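(* Let $p,q\ge 2$ be integers with $q\equiv \pm 1\pmod p$. Then $$\sum_{\substack{n=1\\ p\nmid n,\ q\nmid n}}^{pq-1}\frac{\cot(\pi n/p)\cot(\pi n/q)}{\sin^2(\pi n/(pq))}=\begin{cases}\dfrac{1}{45p}(p^2-1)(p^2-4)(q-1)^2(q+2), & q\equiv 1\pmod p,\\[2mm] \dfrac{1}{45p}(p^2-1)(p^2-4)(q+1)^2(q-2), & q\equiv -1\pmod p.\end{cases}$$ *)

theory Defs
  imports Complex_Main "HOL-Number_Theory.Cong"
begin

end

theory Submission
  imports Defs "HOL-Real_Asymp.Real_Asymp"
begin

text \<open>
  Let e = +1 or -1 be the residue of q mod p. By the Chinese remainder theorem,
  n = e (a q - c p) mod p q is a bijection from the pairs 0 < a < p, 0 < c < q onto the range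
  of summation, and for v = pi c / q the summand at n becomes
  -e cot (p v) cot (pi a / p) / sin (pi a / p - v)^2.
  The sum over a is evaluated by partial fractions together with the closed forms of the sums
  of f (x + pi c / q) over c < q for f = cot, csc^2, cot csc^2 and csc^4; these come from the
  multiplication formula for cot (a sum of roots of unity) by repeated differentiation.
  What remains is expanded once more over the shifts v + pi j / p. Since q theta = e theta mod pi
  for theta = pi j / p, the shifted sums over c collapse, and everything reduces to the classical
  values sum csc^2 (pi c / q) = (q^2 - 1) / 3 and sum csc^4 (pi c / q) = (q^2 - 1)(q^2 + 11) / 45,
  obtained as x \<rightarrow> 0 limits of the same closed forms.
\<close>

lemma cot_add_of_int_mult_pi: "cot (x + of_int m * pi) = cot x"
  by (simp add: cot_altdef)

lemma sin_squared_add_of_int_mult_pi: "sin (x + of_int m * pi) ^ 2 = sin x ^ 2"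
proof -
  have s: "sin (of_int m * pi) = 0" by (simp add: mult.commute)
  have c: "cos (of_int m * pi) ^ 2 = 1" using sin_cos_squared_add[of "of_int m * pi"] s by simp
  show ?thesis by (simp add: sin_add s power_mult_distrib c)
qed

lemma sin_squared_sign: "e = 1 \<or> e = -1 \<Longrightarrow> sin (of_int e * x) ^ 2 = sin x ^ 2"
  by (cases "e = 1") auto

lemma sin_pi_div_nonzero:
  fixes n q :: nat
  assumes "q > 0" and "\<not> q dvd n"
  shows "sin (pi * real n / real q) \<noteq> 0"
proof
  assume "sin (pi * real n / real q) = 0"
  then obtain i :: int where "pi * real n / real q = of_int i * pi" by (auto simp: sin_zero_iff_int2)
  hence "real n = of_int i * real q" using assms(1) by (simp add: field_simps)
  hence "int n = i * int q" by (metis of_int_eq_iff of_int_mult of_int_of_nat_eq)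
  thus False using assms(2) by (metis dvd_triv_right int_dvd_int_iff)
qed

lemma sin_pi_frac_nonzero: "c \<in> {1..<q} \<Longrightarrow> sin (pi * real c / real q) \<noteq> 0"
  by (rule sin_pi_div_nonzero) (auto dest: dvd_imp_le)

lemma sin_nat_mult_pi_frac_nonzero:
  fixes p q c :: nat
  assumes "coprime p q" and "c \<in> {1..<q}"
  shows "sin (real p * (pi * real c / real q)) \<noteq> 0"
proof -
  have "\<not> q dvd p * c"
    using assms by (auto simp: coprime_commute coprime_dvd_mult_right_iff dest: dvd_imp_le)
  hence "sin (pi * real (p * c) / real q) \<noteq> 0" using assms(2) by (intro sin_pi_div_nonzero) auto
  thus ?thesis by (simp add: mult_ac)
qed

lemma sin_nonzero_if_sin_nat_mult_nonzero: "sin (real n * y) \<noteq> 0 \<Longrightarrow> sin y \<noteq> 0"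
proof
  assume "sin (real n * y) \<noteq> 0" "sin y = 0"
  then obtain i :: int where "y = of_int i * pi" by (auto simp: sin_zero_iff_int2)
  hence "real n * y = of_int (int n * i) * pi" by simp
  hence "sin (real n * y) = 0" unfolding sin_zero_iff_int2 by blast
  thus False using \<open>sin (real n * y) \<noteq> 0\<close> by simp
qed

lemma sin_shift_nonzero:
  fixes q :: nat
  assumes "q > 0" and "sin (real q * x) \<noteq> 0"
  shows "sin (x + pi * real c / real q) \<noteq> 0"
proof (rule sin_nonzero_if_sin_nat_mult_nonzero[of q])
  have "real q * (x + pi * real c / real q) = real q * x + of_int (int c) * pi"
    using assms(1) by (simp add: field_simps)
  hence "sin (real q * (x + pi * real c / real q)) ^ 2 = sin (real q * x) ^ 2"
    by (simp only: sin_squared_add_of_int_mult_pi)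
  thus "sin (real q * (x + pi * real c / real q)) \<noteq> 0" using assms(2) by auto
qed

lemma cis_double_eq_one_iff: "cis (2 * y) = 1 \<longleftrightarrow> sin y = 0"
  by (auto simp: complex_eq_iff cos_double_sin sin_double)

lemma cot_eq_cis_double:
  assumes "sin y \<noteq> 0"
  shows "complex_of_real (cot y) = \<i> + 2 * \<i> / (cis (2 * y) - 1)"
proof -
  have "cis (2 * y) - 1 = Complex (- 2 * sin y ^ 2) (2 * sin y * cos y)"
    by (simp add: complex_eq_iff cos_double_sin sin_double)
  also have "\<dots> = 2 * of_real (sin y) * \<i> * cis y"
    by (simp add: complex_eq_iff power2_eq_square)
  finally have cis_double: "cis (2 * y) - 1 = 2 * of_real (sin y) * \<i> * cis y" .
  have "\<i> * of_real (sin y) * cis y + 1 = of_real (cos y) * cis y"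
    by (simp add: complex_eq_iff cis.ctr power2_eq_square)
       (smt (verit) sin_cos_squared_add power2_eq_square)
  hence "\<i> + 2 * \<i> / (2 * of_real (sin y) * \<i> * cis y) = of_real (cos y) * cis y / (of_real (sin y) * cis y)"
    using assms by (simp add: field_simps)
  also have "\<dots> = of_real (cot y)"
    using assms by (simp add: cot_def)
  finally show ?thesis using cis_double by simp
qed

lemma cot_add_product:
  assumes "sin x \<noteq> 0" "sin y \<noteq> 0" "sin (x + y) \<noteq> 0"
  shows "cot x * cot (x + y) = cot y * (cot x - cot (x + y)) - 1"
proof -
  have "sin x * sin y * sin (x + y) * (cot x * cot (x + y))
      = sin x * sin y * sin (x + y) * (cot y * (cot x - cot (x + y)) - 1)"
    using assms apply (simp add: cot_def field_simps)
    using sin_add[of x y] cos_add[of x y] sin_cos_squared_add[of x] sin_cos_squared_add[of y] by algebra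
  thus ?thesis using assms by simp
qed

lemma one_div_sin_squared: "sin y \<noteq> 0 \<Longrightarrow> 1 / sin y ^ 2 = 1 + cot y ^ 2"
  by (simp add: cot_def field_simps)

section \<open>Sums over the shifts \<open>x + \<pi>c/q\<close>\<close>

text \<open>Expand each term as a geometric sum; averaging over \<open>c\<close> kills all powers \<open>z\<^sup>m\<close>
  with \<open>0 < m < q\<close>.\<close>

lemma sum_inverse_root_of_unity_shifts:
  fixes z w :: complex and q :: nat
  assumes q: "q > 0" and wq: "w ^ q = 1" and wm: "\<And>m. 0 < m \<Longrightarrow> m < q \<Longrightarrow> w ^ m \<noteq> 1"
    and zq: "z ^ q \<noteq> 1"
  shows "(\<Sum>c<q. 1 / (z * w ^ c - 1)) = of_nat q / (z ^ q - 1)"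
proof -
  have power_q: "(z * w ^ c) ^ q = z ^ q" for c
    by (simp add: power_mult_distrib flip: power_mult) (simp add: power_mult mult.commute[of c] wq)
  have geometric: "1 / (z * w ^ c - 1) = (\<Sum>m<q. (z * w ^ c) ^ m) / (z ^ q - 1)" for c
  proof -
    have ne: "z * w ^ c \<noteq> 1" using power_q[of c] zq by auto
    have "(\<Sum>m<q. (z * w ^ c) ^ m) = ((z * w ^ c) ^ q - 1) / (z * w ^ c - 1)"
      using geometric_sum[OF ne] by simp
    thus ?thesis using power_q[of c] zq ne by (simp add: field_simps)
  qed
  have orthogonality: "(\<Sum>c<q. (w ^ m) ^ c) = (if m = 0 then of_nat q else 0)" if "m < q" for m
  proof (cases "m = 0")
    case False
    have ne: "w ^ m \<noteq> 1" using wm[of m] False that by auto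
    have "(w ^ m) ^ q = 1" by (simp flip: power_mult) (simp add: power_mult mult.commute[of m] wq)
    thus ?thesis using geometric_sum[OF ne, of q] False by simp
  qed simp
  have "(\<Sum>c<q. 1 / (z * w ^ c - 1)) = (\<Sum>c<q. \<Sum>m<q. (z * w ^ c) ^ m) / (z ^ q - 1)"
    by (simp add: geometric sum_divide_distrib)
  also have "(\<Sum>c<q. \<Sum>m<q. (z * w ^ c) ^ m) = (\<Sum>m<q. z ^ m * (\<Sum>c<q. (w ^ m) ^ c))"
    by (subst sum.swap) (simp add: power_mult_distrib sum_distrib_left flip: power_mult,
        simp add: mult.commute)
  also have "\<dots> = of_nat q"
    using q by (simp add: orthogonality if_distrib sum.If_cases)
  finally show ?thesis .
qed

lemma sum_cot_shifts:
  fixes q :: nat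
  assumes q: "q > 0" and sx: "sin (real q * x) \<noteq> 0"
  shows "(\<Sum>c<q. cot (x + pi * real c / real q)) = real q * cot (real q * x)"
proof -
  define w where "w = cis (2 * pi / real q)"
  define z where "z = cis (2 * x)"
  have wq: "w ^ q = 1" using q by (simp add: w_def DeMoivre)
  have wm: "w ^ m \<noteq> 1" if "0 < m" "m < q" for m
  proof -
    have "w ^ m = cis (2 * (pi * real m / real q))" by (simp add: w_def DeMoivre algebra_simps)
    moreover have "sin (pi * real m / real q) \<noteq> 0"
      using sin_pi_div_nonzero[of q m] that by (simp add: nat_dvd_not_less)
    ultimately show ?thesis by (metis cis_double_eq_one_iff)
  qed
  have zq: "z ^ q = cis (2 * (real q * x))" by (simp add: z_def DeMoivre algebra_simps)
  have zq1: "z ^ q \<noteq> 1" using sx by (simp add: zq cis_double_eq_one_iff)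
  have sc: "sin (x + pi * real c / real q) \<noteq> 0" for c using sin_shift_nonzero[OF q sx] .
  have wc: "cis (2 * (x + pi * real c / real q)) = z * w ^ c" for c
    by (simp add: z_def w_def DeMoivre cis_mult algebra_simps)
  have "complex_of_real (\<Sum>c<q. cot (x + pi * real c / real q))
      = (\<Sum>c<q. \<i>) + 2 * \<i> * (\<Sum>c<q. 1 / (z * w ^ c - 1))"
    unfolding of_real_sum sum_distrib_left sum.distrib[symmetric]
    by (intro sum.cong refl) (simp only: cot_eq_cis_double[OF sc] wc, simp)
  also have "\<dots> = of_nat q * (\<i> + 2 * \<i> / (z ^ q - 1))"
    by (simp add: sum_inverse_root_of_unity_shifts[OF q wq wm zq1] algebra_simps)
  also have "\<dots> = complex_of_real (real q * cot (real q * x))"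
    by (simp add: cot_eq_cis_double[OF sx] zq)
  finally show ?thesis by (simp only: of_real_eq_iff)
qed

lemma sum_shifts_derivative:
  fixes f g f' :: "real \<Rightarrow> real" and q :: nat
  assumes q: "q > 0" and sx: "sin (real q * x0) \<noteq> 0"
    and eq: "\<And>x. sin (real q * x) \<noteq> 0 \<Longrightarrow> (\<Sum>c<q. f (x + pi * real c / real q)) = g x"
    and df: "\<And>y. sin y \<noteq> 0 \<Longrightarrow> (f has_real_derivative f' y) (at y)"
    and dg: "(g has_real_derivative g') (at x0)"
  shows "(\<Sum>c<q. f' (x0 + pi * real c / real q)) = g'"
proof -
  define U where "U = {x. sin (real q * x) \<noteq> 0}"
  have "((\<lambda>x. \<Sum>c<q. f (x + pi * real c / real q))
      has_real_derivative (\<Sum>c<q. f' (x0 + pi * real c / real q))) (at x0)"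
  proof (rule DERIV_sum)
    fix c
    have "(f has_real_derivative f' (x0 + pi * real c / real q)) (at (x0 + pi * real c / real q))"
      by (rule df) (rule sin_shift_nonzero[OF q sx])
    thus "((\<lambda>x. f (x + pi * real c / real q)) has_real_derivative f' (x0 + pi * real c / real q)) (at x0)"
      by (simp add: DERIV_shift)
  qed
  moreover have "open U" unfolding U_def
    by (rule open_Collect_neq) (auto intro!: continuous_intros)
  ultimately have "(g has_real_derivative (\<Sum>c<q. f' (x0 + pi * real c / real q))) (at x0)"
    by (rule has_field_derivative_transform_within_open) (auto simp: U_def sx eq)
  thus ?thesis using dg DERIV_unique by blast
qed

lemma sum_csc_squared_shifts:
  fixes q :: nat
  assumes q: "q > 0" and sx: "sin (real q * x) \<noteq> 0"
  shows "(\<Sum>c<q. 1 / sin (x + pi * real c / real q) ^ 2) = real q ^ 2 / sin (real q * x) ^ 2"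
proof -
  have "(\<Sum>c<q. - inverse (sin (x + pi * real c / real q) ^ 2))
      = real q * (- inverse (sin (real q * x) ^ 2) * real q)"
  proof (rule sum_shifts_derivative[OF q sx, of cot "\<lambda>x. real q * cot (real q * x)"])
    show "(\<Sum>c<q. cot (x + pi * real c / real q)) = real q * cot (real q * x)"
      if "sin (real q * x) \<noteq> 0" for x
      using sum_cot_shifts[OF q that] .
    show "(cot has_real_derivative - inverse (sin y ^ 2)) (at y)" if "sin y \<noteq> 0" for y
      using DERIV_cot[OF that] .
    show "((\<lambda>x. real q * cot (real q * x))
        has_real_derivative real q * (- inverse (sin (real q * x) ^ 2) * real q)) (at x)"
      by (intro DERIV_cmult DERIV_chain2[of cot _ "\<lambda>x. real q * x", OF DERIV_cot[OF sx]])
        (auto intro!: derivative_eq_intros)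
  qed
  thus ?thesis by (simp add: sum_negf divide_inverse power2_eq_square mult_ac)
qed

lemma DERIV_csc_squared:
  "sin y \<noteq> 0 \<Longrightarrow> ((\<lambda>y. 1 / sin y ^ 2) has_real_derivative (-2 * cot y / sin y ^ 2)) (at y)"
  by (auto intro!: derivative_eq_intros simp: cot_def field_simps power2_eq_square power3_eq_cube)

lemma DERIV_cot_csc_squared:
  assumes "sin y \<noteq> 0"
  shows "((\<lambda>y. cot y / sin y ^ 2) has_real_derivative (2 / sin y ^ 2 - 3 / sin y ^ 4)) (at y)"
proof -
  have "((\<lambda>y. cos y / sin y ^ 3) has_real_derivative (2 / sin y ^ 2 - 3 / sin y ^ 4)) (at y)"
    using assms
    apply (auto intro!: derivative_eq_intros
        simp: field_simps power2_eq_square power3_eq_cube eval_nat_numeral)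
    using sin_cos_squared_add[of y] by algebra
  moreover have cot_csc_squared: "(\<lambda>y. cot y / sin y ^ 2) = (\<lambda>y. cos y / sin y ^ 3)"
    by (auto simp: cot_def power2_eq_square power3_eq_cube)
  ultimately show ?thesis by (simp only: cot_csc_squared)
qed

lemma sum_cot_csc_squared_shifts:
  fixes q :: nat
  assumes q: "q > 0" and sx: "sin (real q * x) \<noteq> 0"
  shows "(\<Sum>c<q. cot (x + pi * real c / real q) / sin (x + pi * real c / real q) ^ 2)
    = real q ^ 3 * cot (real q * x) / sin (real q * x) ^ 2"
proof -
  have "(\<Sum>c<q. -2 * cot (x + pi * real c / real q) / sin (x + pi * real c / real q) ^ 2)
      = real q ^ 2 * ((-2 * cot (real q * x) / sin (real q * x) ^ 2) * real q)"
  proof (rule sum_shifts_derivative[OF q sx, of "\<lambda>y. 1 / sin y ^ 2" "\<lambda>x. real q ^ 2 / sin (real q * x) ^ 2"])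
    show "(\<Sum>c<q. 1 / sin (x + pi * real c / real q) ^ 2) = real q ^ 2 / sin (real q * x) ^ 2"
      if "sin (real q * x) \<noteq> 0" for x
      using sum_csc_squared_shifts[OF q that] .
    show "((\<lambda>y. 1 / sin y ^ 2) has_real_derivative -2 * cot y / sin y ^ 2) (at y)"
      if "sin y \<noteq> 0" for y
      using DERIV_csc_squared[OF that] .
    have "((\<lambda>x. real q ^ 2 * (1 / sin (real q * x) ^ 2))
        has_real_derivative real q ^ 2 * ((-2 * cot (real q * x) / sin (real q * x) ^ 2) * real q)) (at x)"
      by (intro DERIV_cmult DERIV_chain2[of "\<lambda>y. 1 / sin y ^ 2" _ "\<lambda>x. real q * x", OF DERIV_csc_squared[OF sx]])
        (auto intro!: derivative_eq_intros)
    thus "((\<lambda>x. real q ^ 2 / sin (real q * x) ^ 2)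
        has_real_derivative real q ^ 2 * ((-2 * cot (real q * x) / sin (real q * x) ^ 2) * real q)) (at x)"
      by simp
  qed
  moreover have "(\<Sum>c<q. -2 * cot (x + pi * real c / real q) / sin (x + pi * real c / real q) ^ 2)
      = -2 * (\<Sum>c<q. cot (x + pi * real c / real q) / sin (x + pi * real c / real q) ^ 2)"
    by (simp add: sum_distrib_left)
  moreover have "real q ^ 2 * ((-2 * cot (real q * x) / sin (real q * x) ^ 2) * real q)
      = -2 * (real q ^ 3 * cot (real q * x) / sin (real q * x) ^ 2)"
    by (simp add: power2_eq_square power3_eq_cube)
  ultimately show ?thesis by simp
qed

lemma sum_csc_fourth_shifts:
  fixes q :: nat
  assumes q: "q > 0" and sx: "sin (real q * x) \<noteq> 0"
  shows "(\<Sum>c<q. 1 / sin (x + pi * real c / real q) ^ 4)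
    = real q ^ 4 / sin (real q * x) ^ 4 - 2/3 * (real q ^ 4 - real q ^ 2) / sin (real q * x) ^ 2"
proof -
  have "(\<Sum>c<q. 2 / sin (x + pi * real c / real q) ^ 2 - 3 / sin (x + pi * real c / real q) ^ 4)
      = real q ^ 3 * ((2 / sin (real q * x) ^ 2 - 3 / sin (real q * x) ^ 4) * real q)"
  proof (rule sum_shifts_derivative[OF q sx, of "\<lambda>y. cot y / sin y ^ 2"
        "\<lambda>x. real q ^ 3 * cot (real q * x) / sin (real q * x) ^ 2"])
    show "(\<Sum>c<q. cot (x + pi * real c / real q) / sin (x + pi * real c / real q) ^ 2)
        = real q ^ 3 * cot (real q * x) / sin (real q * x) ^ 2" if "sin (real q * x) \<noteq> 0" for x
      using sum_cot_csc_squared_shifts[OF q that] .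
    show "((\<lambda>y. cot y / sin y ^ 2) has_real_derivative 2 / sin y ^ 2 - 3 / sin y ^ 4) (at y)"
      if "sin y \<noteq> 0" for y
      using DERIV_cot_csc_squared[OF that] .
    have "((\<lambda>x. real q ^ 3 * (cot (real q * x) / sin (real q * x) ^ 2))
        has_real_derivative real q ^ 3 * ((2 / sin (real q * x) ^ 2 - 3 / sin (real q * x) ^ 4) * real q)) (at x)"
      by (intro DERIV_cmult DERIV_chain2[of "\<lambda>y. cot y / sin y ^ 2" _ "\<lambda>x. real q * x", OF DERIV_cot_csc_squared[OF sx]])
        (auto intro!: derivative_eq_intros)
    thus "((\<lambda>x. real q ^ 3 * cot (real q * x) / sin (real q * x) ^ 2)
        has_real_derivative real q ^ 3 * ((2 / sin (real q * x) ^ 2 - 3 / sin (real q * x) ^ 4) * real q)) (at x)"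
      by simp
  qed
  hence "2 * (\<Sum>c<q. 1 / sin (x + pi * real c / real q) ^ 2) - 3 * (\<Sum>c<q. 1 / sin (x + pi * real c / real q) ^ 4)
      = real q ^ 4 * (2 / sin (real q * x) ^ 2 - 3 / sin (real q * x) ^ 4)"
    by (simp add: sum_subtractf sum_distrib_left power2_eq_square eval_nat_numeral)
  hence "2 * (real q ^ 2 * (1 / sin (real q * x) ^ 2)) - 3 * (\<Sum>c<q. 1 / sin (x + pi * real c / real q) ^ 4)
      = real q ^ 4 * (2 * (1 / sin (real q * x) ^ 2) - 3 * (1 / sin (real q * x) ^ 4))"
    unfolding sum_csc_squared_shifts[OF q sx] by simp
  moreover have "T = Q ^ 4 * K4 - 2/3 * (Q ^ 4 - Q ^ 2) * K2"
    if "2 * (Q ^ 2 * K2) - 3 * T = Q ^ 4 * (2 * K2 - 3 * K4)" for T Q K2 K4 :: real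
    using that by (simp add: algebra_simps)
  ultimately show ?thesis by fastforce
qed

lemma sum_lessThan_eq_zero_plus_atLeast_one:
  fixes f :: "nat \<Rightarrow> 'a::comm_monoid_add"
  shows "q > 0 \<Longrightarrow> (\<Sum>c<q. f c) = f 0 + (\<Sum>c\<in>{1..<q}. f c)"
  by (simp add: atLeast0LessThan[symmetric] sum.atLeast_Suc_lessThan)

lemma sum_cot_proper_shifts:
  fixes q :: nat
  assumes "q > 0" and "sin (real q * x) \<noteq> 0"
  shows "(\<Sum>c\<in>{1..<q}. cot (x + pi * real c / real q)) = real q * cot (real q * x) - cot x"
  using sum_cot_shifts[OF assms] sum_lessThan_eq_zero_plus_atLeast_one[OF assms(1),
      of "\<lambda>c. cot (x + pi * real c / real q)"] by simp

lemma sum_csc_squared_proper_shifts: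
  fixes q :: nat
  assumes "q > 0" and "sin (real q * x) \<noteq> 0"
  shows "(\<Sum>c\<in>{1..<q}. 1 / sin (x + pi * real c / real q) ^ 2)
    = real q ^ 2 / sin (real q * x) ^ 2 - 1 / sin x ^ 2"
  using sum_csc_squared_shifts[OF assms] sum_lessThan_eq_zero_plus_atLeast_one[OF assms(1),
      of "\<lambda>c. 1 / sin (x + pi * real c / real q) ^ 2"] by simp

lemma sum_cot_csc_squared_proper_shifts:
  fixes q :: nat
  assumes "q > 0" and "sin (real q * x) \<noteq> 0"
  shows "(\<Sum>c\<in>{1..<q}. cot (x + pi * real c / real q) / sin (x + pi * real c / real q) ^ 2)
    = real q ^ 3 * cot (real q * x) / sin (real q * x) ^ 2 - cot x / sin x ^ 2"
  using sum_cot_csc_squared_shifts[OF assms] sum_lessThan_eq_zero_plus_atLeast_one[OF assms(1),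
      of "\<lambda>c. cot (x + pi * real c / real q) / sin (x + pi * real c / real q) ^ 2"] by simp

section \<open>The values of the sums at \<open>x = 0\<close>\<close>

lemma sum_pi_frac_eq_limit:
  fixes f g :: "real \<Rightarrow> real" and q :: nat
  assumes cont: "\<And>c. c \<in> {1..<q} \<Longrightarrow> isCont f (pi * real c / real q)"
    and eq: "eventually (\<lambda>x. g x = (\<Sum>c\<in>{1..<q}. f (x + pi * real c / real q))) (at_right 0)"
    and lim: "(g \<longlongrightarrow> L) (at_right 0)"
  shows "(\<Sum>c\<in>{1..<q}. f (pi * real c / real q)) = L"
proof -
  have "((\<lambda>x. \<Sum>c\<in>{1..<q}. f (x + pi * real c / real q)) \<longlongrightarrow> (\<Sum>c\<in>{1..<q}. f (pi * real c / real q)))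
      (at_right 0)"
  proof (rule tendsto_sum)
    fix c assume "c \<in> {1..<q}"
    have "((\<lambda>x. x + pi * real c / real q) \<longlongrightarrow> pi * real c / real q) (at_right 0)"
      by (auto intro!: tendsto_eq_intros)
    thus "((\<lambda>x. f (x + pi * real c / real q)) \<longlongrightarrow> f (pi * real c / real q)) (at_right 0)"
      by (rule isCont_tendsto_compose[OF cont[OF \<open>c \<in> {1..<q}\<close>]])
  qed
  moreover have "((\<lambda>x. \<Sum>c\<in>{1..<q}. f (x + pi * real c / real q)) \<longlongrightarrow> L) (at_right 0)"
    using lim eq by (rule Lim_transform_eventually)
  ultimately show ?thesis by (simp add: tendsto_unique[OF trivial_limit_at_right_real])
qed

lemma eventually_sin_nonzero_at_right:
  fixes q :: nat
  assumes "q > 0"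
  shows "eventually (\<lambda>x. x > 0 \<and> sin (real q * x) \<noteq> 0 \<and> sin x \<noteq> 0) (at_right 0)"
proof -
  have "eventually (\<lambda>x. x \<in> {0<..<pi / real q}) (at_right 0)"
    by (rule eventually_at_right_real) (use assms in simp)
  thus ?thesis
  proof (rule eventually_mono)
    fix x assume x: "x \<in> {0<..<pi / real q}"
    have "0 < real q * x" "real q * x < pi" using x assms by (auto simp: field_simps)
    thus "x > 0 \<and> sin (real q * x) \<noteq> 0 \<and> sin x \<noteq> 0"
      using x sin_gt_zero sin_nonzero_if_sin_nat_mult_nonzero[of q x] by force
  qed
qed

lemma csc_squared_minus_inverse_square_limit:
  "((\<lambda>y::real. 1 / sin y ^ 2 - 1 / y ^ 2) \<longlongrightarrow> 1/3) (at_right 0)"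
  by real_asymp

lemma csc_fourth_minus_principal_part_limit:
  "((\<lambda>y::real. 1 / sin y ^ 4 - 1 / y ^ 4 - 2 / (3 * y ^ 2)) \<longlongrightarrow> 11/45) (at_right 0)"
  by real_asymp

lemma filterlim_mult_left_at_right_0:
  "(q::real) > 0 \<Longrightarrow> filterlim (\<lambda>x. q * x) (at_right 0) (at_right 0)"
  by real_asymp

lemma sum_csc_squared_pi_frac:
  fixes q :: nat
  assumes q: "q > 0"
  shows "(\<Sum>c\<in>{1..<q}. 1 / sin (pi * real c / real q) ^ 2) = (real q ^ 2 - 1) / 3"
proof (rule sum_pi_frac_eq_limit)
  define g where "g y = 1 / sin y ^ 2 - 1 / y ^ 2" for y :: real
  have qp: "real q > 0" using q by simp
  show "isCont (\<lambda>y. 1 / sin y ^ 2) (pi * real c / real q)" if "c \<in> {1..<q}" for c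
    using sin_pi_frac_nonzero[OF that] by (intro continuous_intros) auto
  show "((\<lambda>x. real q ^ 2 * g (real q * x) - g x) \<longlongrightarrow> (real q ^ 2 - 1) / 3) (at_right 0)"
    using tendsto_diff[OF tendsto_mult_left[OF filterlim_compose[OF csc_squared_minus_inverse_square_limit
          filterlim_mult_left_at_right_0[OF qp]]] csc_squared_minus_inverse_square_limit]
    by (simp add: g_def o_def diff_divide_distrib)
  show "eventually (\<lambda>x. real q ^ 2 * g (real q * x) - g x
      = (\<Sum>c\<in>{1..<q}. 1 / sin (x + pi * real c / real q) ^ 2)) (at_right 0)"
    using eventually_sin_nonzero_at_right[OF q]
  proof (rule eventually_mono, elim conjE)
    fix x :: real assume "x > 0" and sx: "sin (real q * x) \<noteq> 0" "sin x \<noteq> 0"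
    note sum_csc_squared_proper_shifts[OF q sx(1)]
    moreover have "real q ^ 2 * g (real q * x) - g x = real q ^ 2 / sin (real q * x) ^ 2 - 1 / sin x ^ 2"
      using qp \<open>x > 0\<close> sx by (simp add: g_def field_simps eval_nat_numeral)
    ultimately show "real q ^ 2 * g (real q * x) - g x
        = (\<Sum>c\<in>{1..<q}. 1 / sin (x + pi * real c / real q) ^ 2)" by simp
  qed
qed

lemma sum_csc_fourth_pi_frac:
  fixes q :: nat
  assumes q: "q > 0"
  shows "(\<Sum>c\<in>{1..<q}. 1 / sin (pi * real c / real q) ^ 4) = (real q ^ 2 - 1) * (real q ^ 2 + 11) / 45"
proof (rule sum_pi_frac_eq_limit)
  define g where "g y = 1 / sin y ^ 2 - 1 / y ^ 2" for y :: real
  define h where "h y = 1 / sin y ^ 4 - 1 / y ^ 4 - 2 / (3 * y ^ 2)" for y :: real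
  have qp: "real q > 0" using q by simp
  show "isCont (\<lambda>y. 1 / sin y ^ 4) (pi * real c / real q)" if "c \<in> {1..<q}" for c
    using sin_pi_frac_nonzero[OF that] by (intro continuous_intros) auto
  have "((\<lambda>x. real q ^ 4 * h (real q * x) - 2/3 * (real q ^ 4 - real q ^ 2) * g (real q * x) - h x)
      \<longlongrightarrow> real q ^ 4 * (11/45) - 2/3 * (real q ^ 4 - real q ^ 2) * (1/3) - 11/45) (at_right 0)"
    unfolding g_def h_def
    by (intro tendsto_intros csc_fourth_minus_principal_part_limit
        filterlim_compose[OF csc_squared_minus_inverse_square_limit filterlim_mult_left_at_right_0[OF qp]]
        filterlim_compose[OF csc_fourth_minus_principal_part_limit filterlim_mult_left_at_right_0[OF qp]])
  also have "real q ^ 4 * (11/45) - 2/3 * (real q ^ 4 - real q ^ 2) * (1/3) - 11/45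
      = (real q ^ 2 - 1) * (real q ^ 2 + 11) / 45"
    by (simp add: field_simps eval_nat_numeral)
  finally show "((\<lambda>x. real q ^ 4 * h (real q * x) - 2/3 * (real q ^ 4 - real q ^ 2) * g (real q * x) - h x)
      \<longlongrightarrow> (real q ^ 2 - 1) * (real q ^ 2 + 11) / 45) (at_right 0)" .
  show "eventually (\<lambda>x. real q ^ 4 * h (real q * x) - 2/3 * (real q ^ 4 - real q ^ 2) * g (real q * x) - h x
      = (\<Sum>c\<in>{1..<q}. 1 / sin (x + pi * real c / real q) ^ 4)) (at_right 0)"
    using eventually_sin_nonzero_at_right[OF q]
  proof (rule eventually_mono, elim conjE)
    fix x :: real assume "x > 0" and sx: "sin (real q * x) \<noteq> 0" "sin x \<noteq> 0"
    have "(\<Sum>c\<in>{1..<q}. 1 / sin (x + pi * real c / real q) ^ 4)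
        = real q ^ 4 / sin (real q * x) ^ 4 - 2/3 * (real q ^ 4 - real q ^ 2) / sin (real q * x) ^ 2 - 1 / sin x ^ 4"
      using sum_csc_fourth_shifts[OF q sx(1)]
        sum_lessThan_eq_zero_plus_atLeast_one[OF q, of "\<lambda>c. 1 / sin (x + pi * real c / real q) ^ 4"]
      by simp
    moreover have "real q ^ 4 * h (real q * x) - 2/3 * (real q ^ 4 - real q ^ 2) * g (real q * x) - h x
        = real q ^ 4 / sin (real q * x) ^ 4 - 2/3 * (real q ^ 4 - real q ^ 2) / sin (real q * x) ^ 2 - 1 / sin x ^ 4"
      using qp \<open>x > 0\<close> sx by (simp add: g_def h_def field_simps eval_nat_numeral)
    ultimately show "real q ^ 4 * h (real q * x) - 2/3 * (real q ^ 4 - real q ^ 2) * g (real q * x) - h x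
        = (\<Sum>c\<in>{1..<q}. 1 / sin (x + pi * real c / real q) ^ 4)" by simp
  qed
qed

lemma sum_eq_zero_if_reflection_antisymmetric:
  fixes f :: "nat \<Rightarrow> real"
  assumes "\<And>c. c \<in> {1..<q} \<Longrightarrow> f (q - c) = - f c"
  shows "sum f {1..<q} = 0"
proof -
  have "sum f {1..<q} = sum (\<lambda>c. f (q - c)) {1..<q}"
    by (rule sum.reindex_bij_witness[of _ "\<lambda>c. q - c" "\<lambda>c. q - c"]) auto
  also have "\<dots> = - sum f {1..<q}" using assms by (simp add: sum_negf)
  finally show ?thesis by simp
qed

text \<open>The period is written \<open>of_int 1 * pi\<close> so that the \<open>\<pi>\<close>-periodicity lemmas above apply.\<close>

lemma pi_frac_reflection: "c < q \<Longrightarrow> pi * real (q - c) / real q = - (pi * real c / real q) + of_int 1 * pi"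
  by (simp add: of_nat_diff field_simps)

lemma sum_cot_pi_frac: "(\<Sum>c\<in>{1..<q}. cot (pi * real c / real q)) = 0"
proof (rule sum_eq_zero_if_reflection_antisymmetric)
  fix c assume "c \<in> {1..<q}"
  then show "cot (pi * real (q - c) / real q) = - cot (pi * real c / real q)"
    by (simp only: pi_frac_reflection cot_add_of_int_mult_pi cot_minus atLeastLessThan_iff)
qed

lemma sum_cot_csc_squared_pi_frac:
  "(\<Sum>c\<in>{1..<q}. cot (pi * real c / real q) / sin (pi * real c / real q) ^ 2) = 0"
proof (rule sum_eq_zero_if_reflection_antisymmetric)
  fix c assume "c \<in> {1..<q}"
  hence c: "c < q" by simp
  have "sin (pi * real (q - c) / real q) ^ 2 = sin (pi * real c / real q) ^ 2"
    by (simp only: pi_frac_reflection[OF c] sin_squared_add_of_int_mult_pi, simp)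
  moreover have "cot (pi * real (q - c) / real q) = - cot (pi * real c / real q)"
    by (simp only: pi_frac_reflection[OF c] cot_add_of_int_mult_pi cot_minus)
  ultimately show "cot (pi * real (q - c) / real q) / sin (pi * real (q - c) / real q) ^ 2
      = - (cot (pi * real c / real q) / sin (pi * real c / real q) ^ 2)"
    by simp
qed

section \<open>Partial fractions\<close>

lemma cot_div_sin_diff_squared:
  assumes "sin t \<noteq> 0" "sin u \<noteq> 0" "sin (t - u) \<noteq> 0"
  shows "cot t / sin (t - u) ^ 2 = (cot t - cot (t - u)) / sin u ^ 2 + cot u / sin (t - u) ^ 2"
proof -
  have "cot (t - u) * cot t = cot u * (cot (t - u) - cot t) - 1"
    using cot_add_product[of "t - u" u] assms by simp
  hence "cot t * (1 + cot (t - u) ^ 2) = (cot t - cot (t - u)) * (1 + cot u ^ 2) + cot u * (1 + cot (t - u) ^ 2)"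
    by algebra
  thus ?thesis
    by (simp only: one_div_sin_squared[OF assms(2), symmetric] one_div_sin_squared[OF assms(3), symmetric]) simp
qed

lemma sum_cot_div_sin_diff_squared:
  fixes p :: nat
  assumes p: "p > 0" and su: "sin u \<noteq> 0" and spu: "sin (real p * u) \<noteq> 0"
  shows "(\<Sum>a\<in>{1..<p}. cot (pi * real a / real p) / sin (pi * real a / real p - u) ^ 2)
    = real p * cot (real p * u) / sin u ^ 2 - 2 * cot u / sin u ^ 2 + real p ^ 2 * cot u / sin (real p * u) ^ 2"
proof -
  have spu': "sin (real p * (- u)) \<noteq> 0" using spu by simp
  have shift: "pi * real a / real p - u = - u + pi * real a / real p" for a by simp
  have nz: "sin (pi * real a / real p - u) \<noteq> 0" for a
    unfolding shift by (rule sin_shift_nonzero[OF p spu'])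
  have "(\<Sum>a\<in>{1..<p}. cot (pi * real a / real p) / sin (pi * real a / real p - u) ^ 2)
      = (\<Sum>a\<in>{1..<p}. (cot (pi * real a / real p) - cot (pi * real a / real p - u)) / sin u ^ 2
          + cot u * (1 / sin (pi * real a / real p - u) ^ 2))"
    by (intro sum.cong refl) (simp add: cot_div_sin_diff_squared sin_pi_frac_nonzero su nz)
  also have "\<dots> = ((\<Sum>a\<in>{1..<p}. cot (pi * real a / real p)) - (\<Sum>a\<in>{1..<p}. cot (- u + pi * real a / real p))) / sin u ^ 2
      + cot u * (\<Sum>a\<in>{1..<p}. 1 / sin (- u + pi * real a / real p) ^ 2)"
    by (simp only: shift sum.distrib sum_subtractf[symmetric] sum_divide_distrib[symmetric] sum_distrib_left[symmetric])
  also have "\<dots> = (0 - (real p * cot (real p * (- u)) - cot (- u))) / sin u ^ 2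
      + cot u * (real p ^ 2 / sin (real p * (- u)) ^ 2 - 1 / sin (- u) ^ 2)"
    by (simp only: sum_cot_pi_frac sum_cot_proper_shifts[OF p spu'] sum_csc_squared_proper_shifts[OF p spu'])
  also have "\<dots> = real p * cot (real p * u) / sin u ^ 2 - 2 * cot u / sin u ^ 2 + real p ^ 2 * cot u / sin (real p * u) ^ 2"
    using su spu by (simp add: field_simps)
  finally show ?thesis .
qed

section \<open>Reindexing by the Chinese remainder theorem\<close>

lemma coprime_if_cong_plus_minus_one:
  fixes p q :: nat and e :: int
  assumes "[int q = e] (mod int p)" and "e = 1 \<or> e = -1"
  shows "coprime p q"
proof -
  obtain k where k: "e = int q + int p * k" using assms(1) by (auto simp: cong_iff_lin)
  have "coprime (int p) (int q)"
  proof (rule coprimeI)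
    fix d assume "d dvd int p" "d dvd int q"
    hence "d dvd e" using k by simp
    thus "is_unit d" using assms(2) by auto
  qed
  thus ?thesis by simp
qed

lemma cong_grid_residues:
  fixes p q a c :: nat and e :: int
  assumes cong: "[int q = e] (mod int p)" and e: "e = 1 \<or> e = -1"
  shows "[e * (int a * int q - int c * int p) = int a] (mod int p)"
    and "[e * (int a * int q - int c * int p) = - e * int c * int p] (mod int q)"
proof -
  have "[int a * (e * int q) - e * int c * int p = int a * (e * e) - 0] (mod int p)"
    using cong by (intro cong_diff cong_scalar_left) (simp_all add: cong_mult_self_right)
  thus "[e * (int a * int q - int c * int p) = int a] (mod int p)"
    using e by (auto simp: algebra_simps)
  show "[e * (int a * int q - int c * int p) = - e * int c * int p] (mod int q)"
    unfolding cong_iff_lin by (rule exI[of _ "- e * int a"]) (simp add: algebra_simps)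
qed

lemma cong_grid_mem:
  fixes p q a c :: nat and e :: int
  assumes p: "p > 0" and q: "q > 0" and cong: "[int q = e] (mod int p)" and e: "e = 1 \<or> e = -1"
    and a: "a \<in> {1..<p}" and c: "c \<in> {1..<q}"
  defines "m \<equiv> nat ((e * (int a * int q - int c * int p)) mod (int p * int q))"
  shows "1 \<le> m" and "m \<le> p * q - 1" and "\<not> p dvd m" and "\<not> q dvd m"
proof -
  have m: "int m = (e * (int a * int q - int c * int p)) mod (int p * int q)"
    using p q by (simp add: m_def)
  have m_mod_p: "[int m = int a] (mod int p)"
    unfolding m mod_mult_cong_right by (rule cong_grid_residues(1)[OF cong e])
  have m_mod_q: "[int m = - e * int c * int p] (mod int q)"
    unfolding m mod_mult_cong_left by (rule cong_grid_residues(2)[OF cong e])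
  show np: "\<not> p dvd m"
    using cong_dvd_iff[OF m_mod_p] a by (auto dest: dvd_imp_le)
  show "\<not> q dvd m"
  proof
    assume "q dvd m"
    hence "int q dvd e * (e * (int c * int p))"
      using cong_dvd_iff[OF m_mod_q] by (simp add: algebra_simps)
    hence "int q dvd int p * int c" using e by (auto simp: mult.commute)
    hence "q dvd c" using coprime_if_cong_plus_minus_one[OF cong e]
      by (simp add: coprime_commute coprime_dvd_mult_right_iff flip: of_nat_mult)
    thus False using c by (auto dest: dvd_imp_le)
  qed
  show "1 \<le> m" using np by (metis dvd_0_right less_one not_le)
  have "m < p * q" using p q by (simp add: m_def nat_less_iff flip: of_nat_mult)
  thus "m \<le> p * q - 1" by simp
qed

text \<open>The inverse of the grid map: \<open>a = n mod p\<close> and \<open>c = -e p' n mod q\<close>, where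
  \<open>p p' \<equiv> 1 (mod q)\<close>.\<close>

lemma cong_grid_inverse_mem:
  fixes p q n :: nat and e p' :: int
  assumes p: "p > 0" and q: "q > 0" and e: "e = 1 \<or> e = -1" and p': "[int p * p' = 1] (mod int q)"
    and np: "\<not> p dvd n" and nq: "\<not> q dvd n"
  shows "n mod p \<in> {1..<p}" and "nat ((- e * p' * int n) mod int q) \<in> {1..<q}"
proof -
  show "n mod p \<in> {1..<p}" using np p by (simp add: dvd_eq_mod_eq_0)
  have "(- e * p' * int n) mod int q \<noteq> 0"
  proof
    assume "(- e * p' * int n) mod int q = 0"
    hence "int q dvd - e * p' * int n" by (simp add: dvd_eq_mod_eq_0)
    hence "int q dvd (- e) * (- e * p' * int n)" by (rule dvd_mult)
    hence "int q dvd p' * int n" using e by (auto simp: algebra_simps)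
    hence "int q dvd int p * p' * int n" by (metis dvd_mult mult.assoc)
    moreover have "[int p * p' * int n = 1 * int n] (mod int q)" by (rule cong_scalar_right[OF p'])
    ultimately have "int q dvd int n" using cong_dvd_iff by fastforce
    thus False using nq by simp
  qed
  thus "nat ((- e * p' * int n) mod int q) \<in> {1..<q}"
    using q by (simp add: nat_less_iff le_nat_iff) (smt (verit) of_nat_0_less_iff pos_mod_sign)
qed

lemma bij_betw_cong_grid:
  fixes p q :: nat and e :: int
  assumes p: "p > 0" and q: "q > 0" and cong: "[int q = e] (mod int p)" and e: "e = 1 \<or> e = -1"
  shows "bij_betw (\<lambda>(a, c). nat ((e * (int a * int q - int c * int p)) mod (int p * int q)))
    ({1..<p} \<times> {1..<q}) {n. 1 \<le> n \<and> n \<le> p * q - 1 \<and> \<not> p dvd n \<and> \<not> q dvd n}"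
proof -
  define X where "X a c = e * (int a * int q - int c * int p)" for a c :: nat
  define f where "f = (\<lambda>(a, c). nat (X a c mod (int p * int q)))"
  have cop: "coprime (int p) (int q)" using coprime_if_cong_plus_minus_one[OF cong e] by simp
  obtain p' where p': "[int p * p' = 1] (mod int q)" using cong_solve_coprime_int[OF cop] by blast
  define g where "g n = (n mod p, nat ((- e * p' * int n) mod int q))" for n
  have invert: "[- e * (- e * p' * x) * int p = x] (mod int q)" for x
  proof -
    have "[int p * p' * x = 1 * x] (mod int q)" by (rule cong_scalar_right[OF p'])
    thus ?thesis using e by (auto simp: algebra_simps)
  qed
  have "g (f (a, c)) = (a, c)" if a: "a \<in> {1..<p}" and c: "c \<in> {1..<q}" for a c
  proof -
    have f: "int (f (a, c)) = X a c mod (int p * int q)" using p q by (simp add: f_def)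
    have "[f (a, c) = a] (mod p)"
      using cong_grid_residues(1)[OF cong e, of a c] by (simp add: f X_def mod_mult_cong_right flip: cong_int_iff)
    hence "f (a, c) mod p = a" using cong_less_imp_eq_nat[of "f (a, c) mod p" p a] a by simp
    moreover have "[- e * p' * int (f (a, c)) = - e * p' * (- e * int c * int p)] (mod int q)"
      using cong_grid_residues(2)[OF cong e, of a c] by (intro cong_scalar_left) (simp add: f X_def mod_mult_cong_left)
    hence "[- e * p' * int (f (a, c)) = int c] (mod int q)"
      using invert[of "int c"] by (auto simp: algebra_simps elim: cong_trans)
    hence "(- e * p' * int (f (a, c))) mod int q = int c"
      using cong_less_imp_eq_int[of "(- e * p' * int (f (a, c))) mod int q" "int q" "int c"] c by simp
    ultimately show ?thesis by (simp add: g_def)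
  qed
  moreover have "f (g n) = n"
    if n: "n \<in> {n. 1 \<le> n \<and> n \<le> p * q - 1 \<and> \<not> p dvd n \<and> \<not> q dvd n}" for n
  proof -
    define a c where "a = n mod p" and "c = nat ((- e * p' * int n) mod int q)"
    have ci: "int c = (- e * p' * int n) mod int q" using q by (simp add: c_def)
    have "[int a = int n] (mod int p)" by (simp add: a_def cong_int_iff)
    hence mod_p: "[X a c = int n] (mod int p)" by (rule cong_trans[OF cong_grid_residues(1)[OF cong e], folded X_def])
    have "[X a c = - e * int c * int p] (mod int q)" unfolding X_def by (rule cong_grid_residues(2)[OF cong e])
    also have "[- e * int c * int p = - e * (- e * p' * int n) * int p] (mod int q)"
      unfolding ci by (intro cong_scalar_left cong_scalar_right) simp
    also note invert
    finally have "[X a c = int n] (mod int p * int q)" by (rule coprime_cong_mult[OF mod_p _ cop])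
    moreover have "n < p * q" using n mult_pos_pos[OF p q] by (simp add: Suc_le_eq) linarith
    ultimately have "X a c mod (int p * int q) = int n"
      using cong_less_imp_eq_int[of "X a c mod (int p * int q)" "int p * int q" "int n"] p q
      by (simp flip: of_nat_mult)
    moreover have "g n = (a, c)" unfolding g_def a_def c_def ..
    ultimately show ?thesis by (simp add: f_def)
  qed
  ultimately have "bij_betw f ({1..<p} \<times> {1..<q}) {n. 1 \<le> n \<and> n \<le> p * q - 1 \<and> \<not> p dvd n \<and> \<not> q dvd n}"
    using cong_grid_mem[OF p q cong e, folded X_def] cong_grid_inverse_mem[OF p q e p']
    by (intro bij_betw_byWitness[where f' = g]) (auto simp: f_def g_def image_subset_iff)
  thus ?thesis by (simp add: f_def X_def)
qed

lemma trig_values_at_cong: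
  fixes p q a c n :: nat and e :: int
  assumes p: "p > 0" and q: "q > 0" and cong: "[int q = e] (mod int p)" and e: "e = 1 \<or> e = -1"
    and n: "[int n = e * (int a * int q - int c * int p)] (mod int p * int q)"
  shows "cot (pi * real n / real p) = cot (pi * real a / real p)"
    and "cot (pi * real n / real q) = - of_int e * cot (real p * (pi * real c / real q))"
    and "sin (pi * real n / real (p * q)) ^ 2 = sin (pi * real a / real p - pi * real c / real q) ^ 2"
proof -
  obtain k where "e * (int a * int q - int c * int p) = int n + int p * int q * k"
    using n by (auto simp: cong_iff_lin)
  hence "int n = e * (int a * int q - int c * int p) + int p * int q * (- k)" by simp
  hence "real_of_int (int n) = real_of_int (e * (int a * int q - int c * int p) + int p * int q * (- k))"
    by (rule arg_cong)
  hence rn: "real n = of_int e * (real a * real q - real c * real p) + real p * real q * of_int (- k)"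
    by simp
  obtain m where "e = int q + int p * m" using cong by (auto simp: cong_iff_lin)
  hence qm: "real q = of_int e - real p * of_int m" by (simp add: algebra_simps)
  have pp: "real p > 0" and qp: "real q > 0" using p q by auto
  have "pi * real n / real p = pi * real a / real p + of_int (- e * a * m - e * c - int q * k) * pi"
    using e
  proof
    assume e1: "e = 1"
    show ?thesis using pp unfolding rn e1 by (simp add: qm e1 field_simps)
  next
    assume e1: "e = -1"
    show ?thesis using pp unfolding rn e1 by (simp add: qm e1 field_simps)
  qed
  thus "cot (pi * real n / real p) = cot (pi * real a / real p)" by (simp only: cot_add_of_int_mult_pi)
  have "pi * real n / real q = - of_int e * (real p * (pi * real c / real q)) + of_int (e * a - int p * k) * pi"
    using pp qp unfolding rn by (simp add: field_simps)
  hence "cot (pi * real n / real q) = cot (- of_int e * (real p * (pi * real c / real q)))"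
    by (simp only: cot_add_of_int_mult_pi)
  also have "\<dots> = - of_int e * cot (real p * (pi * real c / real q))" using e by auto
  finally show "cot (pi * real n / real q) = - of_int e * cot (real p * (pi * real c / real q))" .
  have "pi * real n / real (p * q) = of_int e * (pi * real a / real p - pi * real c / real q) + of_int (- k) * pi"
    using pp qp unfolding rn by (simp add: field_simps)
  hence "sin (pi * real n / real (p * q)) ^ 2 = sin (of_int e * (pi * real a / real p - pi * real c / real q)) ^ 2"
    by (simp only: sin_squared_add_of_int_mult_pi)
  also have "\<dots> = sin (pi * real a / real p - pi * real c / real q) ^ 2"
    using sin_squared_sign[OF e] .
  finally show "sin (pi * real n / real (p * q)) ^ 2 = sin (pi * real a / real p - pi * real c / real q) ^ 2" .
qed

section \<open>Shifts by \<open>\<pi>j/p\<close> when \<open>q \<equiv> \<plusminus>1 (mod p)\<close>\<close>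

lemma nat_mult_pi_frac_cong:
  fixes p q j :: nat and e :: int
  assumes p: "p > 0" and cong: "[int q = e] (mod int p)" and e: "e = 1 \<or> e = -1"
  shows "cot (real q * (pi * real j / real p)) = of_int e * cot (pi * real j / real p)"
    and "sin (real q * (pi * real j / real p)) ^ 2 = sin (pi * real j / real p) ^ 2"
proof -
  obtain k where "e = int q + int p * k" using cong by (auto simp: cong_iff_lin)
  hence q_eq: "real q = of_int e - real p * of_int k" by (simp add: algebra_simps)
  have eq: "real q * (pi * real j / real p) = of_int e * (pi * real j / real p) + of_int (- int j * k) * pi"
    using p by (simp add: q_eq field_simps)
  show "cot (real q * (pi * real j / real p)) = of_int e * cot (pi * real j / real p)"
    unfolding eq cot_add_of_int_mult_pi using e by auto
  show "sin (real q * (pi * real j / real p)) ^ 2 = sin (pi * real j / real p) ^ 2"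
    unfolding eq sin_squared_add_of_int_mult_pi using e by auto
qed

lemma sums_pi_frac_shifted:
  fixes p q j :: nat and e :: int
  assumes p: "p > 0" and q: "q > 0" and cong: "[int q = e] (mod int p)" and e: "e = 1 \<or> e = -1"
    and j: "j \<in> {1..<p}"
  defines "\<theta> \<equiv> pi * real j / real p"
  shows "(\<Sum>c\<in>{1..<q}. cot (\<theta> + pi * real c / real q)) = (of_int e * real q - 1) * cot \<theta>"
    and "(\<Sum>c\<in>{1..<q}. 1 / sin (\<theta> + pi * real c / real q) ^ 2) = (real q ^ 2 - 1) / sin \<theta> ^ 2"
    and "(\<Sum>c\<in>{1..<q}. cot (\<theta> + pi * real c / real q) / sin (\<theta> + pi * real c / real q) ^ 2)
      = (of_int e * real q ^ 3 - 1) * cot \<theta> / sin \<theta> ^ 2"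
proof -
  note cot_q\<theta> = nat_mult_pi_frac_cong(1)[OF p cong e, of j, folded \<theta>_def]
  note sin_q\<theta> = nat_mult_pi_frac_cong(2)[OF p cong e, of j, folded \<theta>_def]
  have "sin \<theta> \<noteq> 0" unfolding \<theta>_def using sin_pi_frac_nonzero[OF j] .
  hence sq: "sin (real q * \<theta>) \<noteq> 0" using sin_q\<theta> by auto
  show "(\<Sum>c\<in>{1..<q}. cot (\<theta> + pi * real c / real q)) = (of_int e * real q - 1) * cot \<theta>"
    using sum_cot_proper_shifts[OF q sq] cot_q\<theta> by (simp add: algebra_simps)
  show "(\<Sum>c\<in>{1..<q}. 1 / sin (\<theta> + pi * real c / real q) ^ 2) = (real q ^ 2 - 1) / sin \<theta> ^ 2"
    using sum_csc_squared_proper_shifts[OF q sq] sin_q\<theta> by (simp add: diff_divide_distrib)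
  show "(\<Sum>c\<in>{1..<q}. cot (\<theta> + pi * real c / real q) / sin (\<theta> + pi * real c / real q) ^ 2)
      = (of_int e * real q ^ 3 - 1) * cot \<theta> / sin \<theta> ^ 2"
    using sum_cot_csc_squared_proper_shifts[OF q sq] cot_q\<theta> sin_q\<theta> by (simp add: algebra_simps diff_divide_distrib)
qed

lemma cot_csc_products_add:
  fixes v \<theta> :: real
  assumes "sin v \<noteq> 0" "sin \<theta> \<noteq> 0" "sin (v + \<theta>) \<noteq> 0"
  shows "(1 / sin (v + \<theta>) ^ 2) * (1 / sin v ^ 2) - 2 * (cot (v + \<theta>) * cot v * (1 / sin v ^ 2))
      + cot (v + \<theta>) * (1 / sin (v + \<theta>) ^ 2) * cot v
    = 3 * (1 / sin \<theta> ^ 2) * (1 / sin v ^ 2) + 3 * cot \<theta> * (1 / sin \<theta> ^ 2) * (cot (v + \<theta>) - cot v)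
      - 2 * cot \<theta> * cot v * (1 / sin v ^ 2) - cot \<theta> * cot (v + \<theta>) * (1 / sin (v + \<theta>) ^ 2)"
proof -
  have "cot v * cot (v + \<theta>) = cot \<theta> * (cot v - cot (v + \<theta>)) - 1"
    by (rule cot_add_product[OF assms])
  thus ?thesis
    unfolding one_div_sin_squared[OF assms(1)] one_div_sin_squared[OF assms(2)] one_div_sin_squared[OF assms(3)]
    by algebra
qed

text \<open>The multiplication formulas for \<open>cot\<close>, \<open>csc\<^sup>2\<close> and \<open>cot csc\<^sup>2\<close> at \<open>p v\<close> trade every factor
  depending on \<open>p v\<close> for a sum over the shifts \<open>v + \<pi>j/p\<close>; then each product of factors at
  \<open>v\<close> and \<open>v + \<pi>j/p\<close> is rewritten by the addition formula.\<close>

lemma cot_csc_products_nat_mult: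
  fixes p :: nat and v :: real
  assumes p: "p > 0" and sv: "sin v \<noteq> 0" and spv: "sin (real p * v) \<noteq> 0"
  shows "real p * cot (real p * v) ^ 2 * (1 / sin v ^ 2) - 2 * cot (real p * v) * cot v * (1 / sin v ^ 2)
       + real p ^ 2 * cot (real p * v) * cot v * (1 / sin (real p * v) ^ 2)
     = (1 / real p - real p) * (1 / sin v ^ 2) + 1 / real p * (\<Sum>j\<in>{1..<p}.
         3 * (1 / sin (pi * real j / real p) ^ 2) * (1 / sin v ^ 2)
         + 3 * cot (pi * real j / real p) * (1 / sin (pi * real j / real p) ^ 2)
           * (cot (v + pi * real j / real p) - cot v)
         - 2 * cot (pi * real j / real p) * cot v * (1 / sin v ^ 2)
         - cot (pi * real j / real p) * cot (v + pi * real j / real p) * (1 / sin (v + pi * real j / real p) ^ 2))"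
proof -
  define C Y A B where "C = cot (real p * v)" and "Y = cot v"
    and "A = 1 / sin v ^ 2" and "B = 1 / sin (real p * v) ^ 2"
  define K1 where "K1 = (\<Sum>j\<in>{1..<p}. cot (v + pi * real j / real p))"
  define K2 where "K2 = (\<Sum>j\<in>{1..<p}. 1 / sin (v + pi * real j / real p) ^ 2)"
  define K3 where "K3 = (\<Sum>j\<in>{1..<p}. cot (v + pi * real j / real p) / sin (v + pi * real j / real p) ^ 2)"
  have K1: "K1 = real p * C - Y"
    using sum_cot_proper_shifts[OF p spv] by (simp add: K1_def C_def Y_def)
  have K2: "K2 = real p ^ 2 * B - A"
    using sum_csc_squared_proper_shifts[OF p spv] by (simp add: K2_def A_def B_def)
  have K3: "K3 = real p ^ 3 * (C * B) - Y * A"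
    using sum_cot_csc_squared_proper_shifts[OF p spv] by (simp add: K3_def A_def B_def C_def Y_def)
  have A: "A = 1 + Y ^ 2" and B: "B = 1 + C ^ 2"
    using one_div_sin_squared[OF sv] one_div_sin_squared[OF spv] by (simp_all add: A_def B_def C_def Y_def)
  have sum_eq: "(\<Sum>j\<in>{1..<p}.
         (1 / sin (v + pi * real j / real p) ^ 2) * (1 / sin v ^ 2)
         - 2 * (cot (v + pi * real j / real p) * cot v * (1 / sin v ^ 2))
         + cot (v + pi * real j / real p) * (1 / sin (v + pi * real j / real p) ^ 2) * cot v)
       = K2 * A - 2 * K1 * Y * A + K3 * Y"
    by (simp add: K1_def K2_def K3_def A_def Y_def sum.distrib sum_subtractf sum_distrib_left
        sum_distrib_right mult_ac)
  have shifted_sum: "(\<Sum>j\<in>{1..<p}.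
         (1 / sin (v + pi * real j / real p) ^ 2) * (1 / sin v ^ 2)
         - 2 * (cot (v + pi * real j / real p) * cot v * (1 / sin v ^ 2))
         + cot (v + pi * real j / real p) * (1 / sin (v + pi * real j / real p) ^ 2) * cot v)
     = (\<Sum>j\<in>{1..<p}.
         3 * (1 / sin (pi * real j / real p) ^ 2) * (1 / sin v ^ 2)
         + 3 * cot (pi * real j / real p) * (1 / sin (pi * real j / real p) ^ 2)
           * (cot (v + pi * real j / real p) - cot v)
         - 2 * cot (pi * real j / real p) * cot v * (1 / sin v ^ 2)
         - cot (pi * real j / real p) * cot (v + pi * real j / real p) * (1 / sin (v + pi * real j / real p) ^ 2))"
    by (intro sum.cong refl cot_csc_products_add[OF sv sin_pi_frac_nonzero sin_shift_nonzero[OF p spv]])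
  have "real p * (real p * C ^ 2 * A - 2 * C * Y * A + real p ^ 2 * C * Y * B)
      = (1 - real p ^ 2) * A + (K2 * A - 2 * K1 * Y * A + K3 * Y)"
    unfolding K1 K2 K3 A B by algebra
  hence "real p * C ^ 2 * A - 2 * C * Y * A + real p ^ 2 * C * Y * B
      = ((1 - real p ^ 2) * A + (K2 * A - 2 * K1 * Y * A + K3 * Y)) / real p"
    using p by (simp add: eq_divide_eq mult.commute)
  also have "\<dots> = (1 / real p - real p) * A + 1 / real p * (K2 * A - 2 * K1 * Y * A + K3 * Y)"
    using p by (simp add: field_simps power2_eq_square)
  finally show ?thesis unfolding shifted_sum[symmetric] sum_eq by (simp only: A_def B_def C_def Y_def)
qed

lemma sum_cot_csc_products_add_pi_frac:
  fixes p q j :: nat and e :: int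
  assumes p: "p > 0" and q: "q > 0" and cong: "[int q = e] (mod int p)" and e: "e = 1 \<or> e = -1"
    and j: "j \<in> {1..<p}"
  defines "\<theta> \<equiv> pi * real j / real p"
  shows "(\<Sum>c\<in>{1..<q}. 3 * (1 / sin \<theta> ^ 2) * (1 / sin (pi * real c / real q) ^ 2)
        + 3 * cot \<theta> * (1 / sin \<theta> ^ 2) * (cot (pi * real c / real q + \<theta>) - cot (pi * real c / real q))
        - 2 * cot \<theta> * cot (pi * real c / real q) * (1 / sin (pi * real c / real q) ^ 2)
        - cot \<theta> * cot (pi * real c / real q + \<theta>) * (1 / sin (pi * real c / real q + \<theta>) ^ 2))
    = (real q ^ 2 - 1) * (1 / sin \<theta> ^ 2)
      + (3 * of_int e * real q - 2 - of_int e * real q ^ 3) * (1 / sin \<theta> ^ 4 - 1 / sin \<theta> ^ 2)"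
proof -
  note shifted = sums_pi_frac_shifted[OF p q cong e j, folded \<theta>_def]
  have s\<theta>: "sin \<theta> \<noteq> 0" unfolding \<theta>_def using sin_pi_frac_nonzero[OF j] .
  have "(\<Sum>c\<in>{1..<q}. 3 * (1 / sin \<theta> ^ 2) * (1 / sin (pi * real c / real q) ^ 2)
        + 3 * cot \<theta> * (1 / sin \<theta> ^ 2) * (cot (pi * real c / real q + \<theta>) - cot (pi * real c / real q))
        - 2 * cot \<theta> * cot (pi * real c / real q) * (1 / sin (pi * real c / real q) ^ 2)
        - cot \<theta> * cot (pi * real c / real q + \<theta>) * (1 / sin (pi * real c / real q + \<theta>) ^ 2))
      = 3 * (1 / sin \<theta> ^ 2) * (\<Sum>c\<in>{1..<q}. 1 / sin (pi * real c / real q) ^ 2)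
        + 3 * cot \<theta> * (1 / sin \<theta> ^ 2)
          * ((\<Sum>c\<in>{1..<q}. cot (\<theta> + pi * real c / real q)) - (\<Sum>c\<in>{1..<q}. cot (pi * real c / real q)))
        - 2 * cot \<theta> * (\<Sum>c\<in>{1..<q}. cot (pi * real c / real q) / sin (pi * real c / real q) ^ 2)
        - cot \<theta> * (\<Sum>c\<in>{1..<q}. cot (\<theta> + pi * real c / real q) / sin (\<theta> + pi * real c / real q) ^ 2)"
    by (simp add: sum.distrib sum_subtractf sum_distrib_left algebra_simps)
  also have "\<dots> = 3 * (1 / sin \<theta> ^ 2) * ((real q ^ 2 - 1) / 3)
        + 3 * cot \<theta> * (1 / sin \<theta> ^ 2) * ((of_int e * real q - 1) * cot \<theta> - 0)
        - 2 * cot \<theta> * 0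
        - cot \<theta> * ((of_int e * real q ^ 3 - 1) * cot \<theta> / sin \<theta> ^ 2)"
    by (simp only: sum_csc_squared_pi_frac[OF q] sum_cot_pi_frac sum_cot_csc_squared_pi_frac shifted)
  also have "\<dots> = (real q ^ 2 - 1) * (1 / sin \<theta> ^ 2)
      + (3 * of_int e * real q - 2 - of_int e * real q ^ 3) * (cot \<theta> ^ 2 * (1 / sin \<theta> ^ 2))"
    using s\<theta> by (simp add: field_simps power2_eq_square power3_eq_cube)
  also have "cot \<theta> ^ 2 * (1 / sin \<theta> ^ 2) = 1 / sin \<theta> ^ 4 - 1 / sin \<theta> ^ 2"
    using s\<theta> by (simp add: cot_def field_simps eval_nat_numeral)
  finally show ?thesis .
qed

lemma sum_cot_csc_products_nat_mult_pi_frac: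
  fixes p q :: nat and e :: int
  assumes p: "p > 0" and q: "q > 0" and cong: "[int q = e] (mod int p)" and e: "e = 1 \<or> e = -1"
  shows "(\<Sum>c\<in>{1..<q}. real p * cot (real p * (pi * real c / real q)) ^ 2 * (1 / sin (pi * real c / real q) ^ 2)
          - 2 * cot (real p * (pi * real c / real q)) * cot (pi * real c / real q) * (1 / sin (pi * real c / real q) ^ 2)
          + real p ^ 2 * cot (real p * (pi * real c / real q)) * cot (pi * real c / real q)
            * (1 / sin (real p * (pi * real c / real q)) ^ 2))
       = (3 * of_int e * real q - 2 - of_int e * real q ^ 3) * (real p ^ 2 - 1) * (real p ^ 2 - 4) / (45 * real p)"
proof -
  have cop: "coprime p q" using coprime_if_cong_plus_minus_one[OF cong e] .
  define E where "E v \<theta> = 3 * (1 / sin \<theta> ^ 2) * (1 / sin v ^ 2) + 3 * cot \<theta> * (1 / sin \<theta> ^ 2) * (cot (v + \<theta>) - cot v)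
    - 2 * cot \<theta> * cot v * (1 / sin v ^ 2) - cot \<theta> * cot (v + \<theta>) * (1 / sin (v + \<theta>) ^ 2)" for v \<theta> :: real
  define \<alpha> where "\<alpha> = 3 * of_int e * real q - 2 - of_int e * real q ^ 3"
  have expand: "real p * cot (real p * (pi * real c / real q)) ^ 2 * (1 / sin (pi * real c / real q) ^ 2)
          - 2 * cot (real p * (pi * real c / real q)) * cot (pi * real c / real q) * (1 / sin (pi * real c / real q) ^ 2)
          + real p ^ 2 * cot (real p * (pi * real c / real q)) * cot (pi * real c / real q)
            * (1 / sin (real p * (pi * real c / real q)) ^ 2)
       = (1 / real p - real p) * (1 / sin (pi * real c / real q) ^ 2)
         + 1 / real p * (\<Sum>j\<in>{1..<p}. E (pi * real c / real q) (pi * real j / real p))"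
    if c: "c \<in> {1..<q}" for c
    unfolding E_def
    by (rule cot_csc_products_nat_mult[OF p sin_pi_frac_nonzero[OF c] sin_nat_mult_pi_frac_nonzero[OF cop c]])
  have sum_sum_E: "(\<Sum>j\<in>{1..<p}. \<Sum>c\<in>{1..<q}. E (pi * real c / real q) (pi * real j / real p))
      = (\<Sum>j\<in>{1..<p}. (real q ^ 2 - 1) * (1 / sin (pi * real j / real p) ^ 2)
        + \<alpha> * (1 / sin (pi * real j / real p) ^ 4 - 1 / sin (pi * real j / real p) ^ 2))"
    unfolding E_def \<alpha>_def by (intro sum.cong refl sum_cot_csc_products_add_pi_frac[OF p q cong e])
  have "(\<Sum>c\<in>{1..<q}. real p * cot (real p * (pi * real c / real q)) ^ 2 * (1 / sin (pi * real c / real q) ^ 2)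
          - 2 * cot (real p * (pi * real c / real q)) * cot (pi * real c / real q) * (1 / sin (pi * real c / real q) ^ 2)
          + real p ^ 2 * cot (real p * (pi * real c / real q)) * cot (pi * real c / real q)
            * (1 / sin (real p * (pi * real c / real q)) ^ 2))
      = (\<Sum>c\<in>{1..<q}. (1 / real p - real p) * (1 / sin (pi * real c / real q) ^ 2)
         + 1 / real p * (\<Sum>j\<in>{1..<p}. E (pi * real c / real q) (pi * real j / real p)))"
    by (rule sum.cong[OF refl expand])
  also have "\<dots> = (1 / real p - real p) * (\<Sum>c\<in>{1..<q}. 1 / sin (pi * real c / real q) ^ 2)
        + 1 / real p * (\<Sum>j\<in>{1..<p}. \<Sum>c\<in>{1..<q}. E (pi * real c / real q) (pi * real j / real p))"
    by (simp only: sum.distrib sum_distrib_left[symmetric] sum.swap[of _ "{1..<q}"])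
  also have "\<dots> = (1 / real p - real p) * ((real q ^ 2 - 1) / 3)
        + 1 / real p * ((real q ^ 2 - 1) * ((real p ^ 2 - 1) / 3)
          + \<alpha> * ((real p ^ 2 - 1) * (real p ^ 2 + 11) / 45 - (real p ^ 2 - 1) / 3))"
    unfolding sum_sum_E
    by (simp only: sum.distrib sum_subtractf sum_distrib_left[symmetric]
        sum_csc_squared_pi_frac[OF q] sum_csc_squared_pi_frac[OF p] sum_csc_fourth_pi_frac[OF p])
  also have "\<dots> = \<alpha> * (real p ^ 2 - 1) * (real p ^ 2 - 4) / (45 * real p)"
    using p by (simp add: field_simps) (simp add: algebra_simps power2_eq_square)
  finally show ?thesis unfolding \<alpha>_def .
qed

lemma sum_cot_cot_div_sin_squared_cong:
  fixes p q :: nat and e :: int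
  assumes p: "p > 0" and q: "q > 0" and cong: "[int q = e] (mod int p)" and e: "e = 1 \<or> e = -1"
  shows "(\<Sum>n\<in>{n. 1 \<le> n \<and> n \<le> p * q - 1 \<and> \<not> p dvd n \<and> \<not> q dvd n}.
      cot (pi * real n / real p) * cot (pi * real n / real q) / (sin (pi * real n / real (p * q)))\<^sup>2)
    = (real q ^ 3 - 3 * real q + 2 * of_int e) * (real p ^ 2 - 1) * (real p ^ 2 - 4) / (45 * real p)"
proof -
  define g where "g n = cot (pi * real n / real p) * cot (pi * real n / real q) / (sin (pi * real n / real (p * q)))\<^sup>2"
    for n :: nat
  define h where "h = (\<lambda>(a, c). nat ((e * (int a * int q - int c * int p)) mod (int p * int q)))"
  have cop: "coprime p q" using coprime_if_cong_plus_minus_one[OF cong e] .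
  have g_h: "g (h (a, c)) = - of_int e * cot (real p * (pi * real c / real q))
      * (cot (pi * real a / real p) / sin (pi * real a / real p - pi * real c / real q) ^ 2)" for a c
  proof -
    have "[int (h (a, c)) = e * (int a * int q - int c * int p)] (mod int p * int q)"
      using p q by (simp add: h_def)
    note trig_values = trig_values_at_cong[OF p q cong e this]
    show ?thesis unfolding g_def trig_values by (simp add: algebra_simps)
  qed
  have inner: "(\<Sum>a\<in>{1..<p}. g (h (a, c)))
      = - of_int e * (real p * cot (real p * (pi * real c / real q)) ^ 2 * (1 / sin (pi * real c / real q) ^ 2)
          - 2 * cot (real p * (pi * real c / real q)) * cot (pi * real c / real q) * (1 / sin (pi * real c / real q) ^ 2)
          + real p ^ 2 * cot (real p * (pi * real c / real q)) * cot (pi * real c / real q)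
            * (1 / sin (real p * (pi * real c / real q)) ^ 2))"
    if c: "c \<in> {1..<q}" for c
  proof -
    have sv: "sin (pi * real c / real q) \<noteq> 0" using sin_pi_frac_nonzero[OF c] .
    have spv: "sin (real p * (pi * real c / real q)) \<noteq> 0" using sin_nat_mult_pi_frac_nonzero[OF cop c] .
    have "(\<Sum>a\<in>{1..<p}. g (h (a, c))) = - of_int e * cot (real p * (pi * real c / real q)) *
        (\<Sum>a\<in>{1..<p}. cot (pi * real a / real p) / sin (pi * real a / real p - pi * real c / real q) ^ 2)"
      by (simp add: g_h sum_distrib_left)
    also have "\<dots> = - of_int e * cot (real p * (pi * real c / real q)) *
        (real p * cot (real p * (pi * real c / real q)) / sin (pi * real c / real q) ^ 2
          - 2 * cot (pi * real c / real q) / sin (pi * real c / real q) ^ 2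
          + real p ^ 2 * cot (pi * real c / real q) / sin (real p * (pi * real c / real q)) ^ 2)"
      by (simp only: sum_cot_div_sin_diff_squared[OF p sv spv])
    finally show ?thesis by (simp add: algebra_simps power2_eq_square)
  qed
  have "(\<Sum>n\<in>{n. 1 \<le> n \<and> n \<le> p * q - 1 \<and> \<not> p dvd n \<and> \<not> q dvd n}. g n) = (\<Sum>x\<in>{1..<p} \<times> {1..<q}. g (h x))"
    by (rule sum.reindex_bij_betw[symmetric]) (unfold h_def, rule bij_betw_cong_grid[OF p q cong e])
  also have "\<dots> = (\<Sum>a\<in>{1..<p}. \<Sum>c\<in>{1..<q}. g (h (a, c)))"
    by (simp add: sum.cartesian_product)
  also have "\<dots> = (\<Sum>c\<in>{1..<q}. \<Sum>a\<in>{1..<p}. g (h (a, c)))"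
    by (rule sum.swap)
  also have "\<dots> = - of_int e * ((3 * of_int e * real q - 2 - of_int e * real q ^ 3)
      * (real p ^ 2 - 1) * (real p ^ 2 - 4) / (45 * real p))"
    by (simp only: sum.cong[OF refl inner] sum_distrib_left[symmetric] sum_cot_csc_products_nat_mult_pi_frac[OF p q cong e])
  also have "\<dots> = (real q ^ 3 - 3 * real q + 2 * of_int e) * (real p ^ 2 - 1) * (real p ^ 2 - 4) / (45 * real p)"
    using e by (auto simp: algebra_simps)
  finally show ?thesis by (simp add: g_def)
qed

theorem mainTheorem12:
  fixes p q :: nat
  assumes "p \<ge> 2" and "q \<ge> 2"
    and "[q = 1] (mod p) \<or> [int q = - 1] (mod int p)"
  defines "S \<equiv> (\<Sum>n\<in>{n. 1 \<le> n \<and> n \<le> p * q - 1 \<and> \<not> p dvd n \<and> \<not> q dvd n}.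
      cot (pi * real n / real p) * cot (pi * real n / real q) / (sin (pi * real n / real (p * q)))\<^sup>2)"
  shows "([q = 1] (mod p) \<longrightarrow>
           S = (real p ^ 2 - 1) * (real p ^ 2 - 4) * (real q - 1) ^ 2 * (real q + 2) / (45 * real p))
       \<and> ([int q = - 1] (mod int p) \<longrightarrow>
           S = (real p ^ 2 - 1) * (real p ^ 2 - 4) * (real q + 1) ^ 2 * (real q - 2) / (45 * real p))"
proof (intro conjI impI)
  have p: "p > 0" and q: "q > 0" using assms(1,2) by auto
  assume "[q = 1] (mod p)"
  hence "[int q = 1] (mod int p)" using cong_int_iff[of q 1 p] by simp
  from sum_cot_cot_div_sin_squared_cong[OF p q this]
  have "S = (real q ^ 3 - 3 * real q + 2) * (real p ^ 2 - 1) * (real p ^ 2 - 4) / (45 * real p)"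
    by (simp add: S_def)
  also have "real q ^ 3 - 3 * real q + 2 = (real q - 1) ^ 2 * (real q + 2)"
    by (simp add: power2_eq_square power3_eq_cube algebra_simps)
  finally show "S = (real p ^ 2 - 1) * (real p ^ 2 - 4) * (real q - 1) ^ 2 * (real q + 2) / (45 * real p)"
    by (simp add: mult_ac)
next
  have p: "p > 0" and q: "q > 0" using assms(1,2) by auto
  assume "[int q = - 1] (mod int p)"
  from sum_cot_cot_div_sin_squared_cong[OF p q this]
  have "S = (real q ^ 3 - 3 * real q - 2) * (real p ^ 2 - 1) * (real p ^ 2 - 4) / (45 * real p)"
    by (simp add: S_def)
  also have "real q ^ 3 - 3 * real q - 2 = (real q + 1) ^ 2 * (real q - 2)"
    by (simp add: power2_eq_square power3_eq_cube algebra_simps)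
  finally show "S = (real p ^ 2 - 1) * (real p ^ 2 - 4) * (real q + 1) ^ 2 * (real q - 2) / (45 * real p)"
    by (simp add: mult_ac)
qed

end
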